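(* Consider a tree power network $(\mathcal{V},\mathcal{E})$, $\mathcal{V}=\{1,\dots,n\}$, with fixed voltage magnitudes $|V_i|=\overline{V}_i>0$, angle limits $\underline{\theta}_{ik}\in[-\pi,0]$, $\overline{\theta}_{ik}\in[0,\pi]$ on each line, and bus power bounds $\underline{P}_i\le P_i\le\overline{P}_i$. Let $\mathcal{P}=\mathcal{P}_\theta\cap\mathcal{P}_P$ and suppose $\mathcal{P}\neq\emptyset$. Assume $$-\tan^{-1}\!\Big(\frac{b_{ik}}{g_{ik}}\Big)<\underline{\theta}_{ik}\le\overline{\theta}_{ik}<\tan^{-1}\!\Big(\frac{b_{ik}}{g_{ik}}\Big)\quad\text{for all }(i,k)\in\mathcal{E}.$$ Then: (1) for every $\mathbf{p}\in\mathcal{P}$ there exists a unique flow vector $\mathbf{f}\in\mathcal{F}_\theta$ with $\mathbf{A}\mathbf{f}=\mathbf{p}$; (2) $\mathcal{P}=\mathcal{O}(\mathcal{P})$; (3) $\mathcal{O}(\mathcal{P})=\mathcal{O}(\mathrm{conv}(\mathcal{P}))$.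
   Context: Each line $(i,k)\in\mathcal{E}$ has admittance $y_{ik}=g_{ik}-jb_{ik}$ with $g_{ik},b_{ik}\ge0$. For $\theta_{ik}=\theta_i-\theta_k$ (difference of bus voltage phases), the line flows are $P_{ik}=\overline{V}_i^2 g_{ik}+\overline{V}_i\overline{V}_k b_{ik}\sin\theta_{ik}-\overline{V}_i\overline{V}_k g_{ik}\cos\theta_{ik}$ and $P_{ki}=\overline{V}_k^2 g_{ik}-\overline{V}_i\overline{V}_k b_{ik}\sin\theta_{ik}-\overline{V}_i\overline{V}_k g_{ik}\cos\theta_{ik}$. The angle-constrained flow region of line $(i,k)$, $\mathcal{F}_{\theta_{ik}}\subset\mathbb{R}^2$, is the set of $(P_{ik},P_{ki})$ as $\theta_{ik}$ ranges over $[\underline{\theta}_{ik},\overline{\theta}_{ik}]$; $\mathcal{F}_\theta=\prod_{(i,k)\in\mathcal{E}}\mathcal{F}_{\theta_{ik}}\subset\mathbb{R}^{2|\mathcal{E}|}$. $\mathbf{A}$ is the $n\times2|\mathcal{E}|$ matrix with $A(i,(k,l))=1$ if $i=k$ and $0$ otherwise, so $(\mathbf{A}\mathbf{f})_i=\sum_{k\sim i}P_{ik}$ is the injection at bus $i$. $\mathcal{P}_\theta=\mathbf{A}\mathcal{F}_\theta$ and $\mathcal{P}_P=\{\mathbf{p}\in\mathbb{R}^n:\underline{P}_i\le P_i\le\overline{P}_i\ \forall i\}$. For $\mathcal{A}\subseteq\mathbb{R}^m$, $\mathcal{O}(\mathcal{A})$ is the set of Pareto-optimal points (points $x\in\mathcal{A}$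 such that no $y\in\mathcal{A}$ has $y\le x$ componentwise with strict inequality in some coordinate); $\mathrm{conv}$ denotes convex hull. *)

theory Defs
  imports "HOL-Analysis.Analysis"
begin

text \<open>Buses are the elements of a finite type 'v (so V = UNIV, n = CARD('v)).
  Lines are given by a set E of ordered pairs (i,k), one orientation per line.
  Line parameters (g, b, angle limits) are indexed by the pair (i,k) in E.\<close>

definition tree_network :: "('v::finite \<times> 'v) set \<Rightarrow> bool" where
  "tree_network E \<longleftrightarrow>
     (\<forall>(i,k)\<in>E. i \<noteq> k \<and> (k,i) \<notin> E) \<and>
     card E = CARD('v) - 1 \<and>
     (\<forall>i j. (i,j) \<in> (E \<union> E\<inverse>)\<^sup>*)"

definition dir_edges :: "('v \<times> 'v) set \<Rightarrow> ('v \<times> 'v) set" where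
  "dir_edges E = E \<union> E\<inverse>"

definition flow_ik :: "('v \<Rightarrow> real) \<Rightarrow> ('v \<times> 'v \<Rightarrow> real) \<Rightarrow> ('v \<times> 'v \<Rightarrow> real)
    \<Rightarrow> 'v \<Rightarrow> 'v \<Rightarrow> real \<Rightarrow> real" where
  "flow_ik Vm g b i k \<theta> =
     (Vm i)\<^sup>2 * g (i,k) + Vm i * Vm k * b (i,k) * sin \<theta> - Vm i * Vm k * g (i,k) * cos \<theta>"

definition flow_ki :: "('v \<Rightarrow> real) \<Rightarrow> ('v \<times> 'v \<Rightarrow> real) \<Rightarrow> ('v \<times> 'v \<Rightarrow> real)
    \<Rightarrow> 'v \<Rightarrow> 'v \<Rightarrow> real \<Rightarrow> real" where
  "flow_ki Vm g b i k \<theta> =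
     (Vm k)\<^sup>2 * g (i,k) - Vm i * Vm k * b (i,k) * sin \<theta> - Vm i * Vm k * g (i,k) * cos \<theta>"

text \<open>Angle-constrained flow region F_theta (product over lines), as vectors indexed
  by ordered pairs; coordinates not corresponding to a directed edge are 0.\<close>
definition flow_region ::
  "('v::finite \<times> 'v) set \<Rightarrow> ('v \<Rightarrow> real) \<Rightarrow> ('v \<times> 'v \<Rightarrow> real) \<Rightarrow> ('v \<times> 'v \<Rightarrow> real)
   \<Rightarrow> ('v \<times> 'v \<Rightarrow> real) \<Rightarrow> ('v \<times> 'v \<Rightarrow> real) \<Rightarrow> (real ^ ('v \<times> 'v)) set" where
  "flow_region E Vm g b \<theta>lo \<theta>hi =
     {f. (\<forall>e. e \<notin> dir_edges E \<longrightarrow> f $ e = 0) \<and>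
         (\<forall>(i,k)\<in>E. \<exists>\<theta>. \<theta>lo (i,k) \<le> \<theta> \<and> \<theta> \<le> \<theta>hi (i,k) \<and>
              f $ (i,k) = flow_ik Vm g b i k \<theta> \<and> f $ (k,i) = flow_ki Vm g b i k \<theta>)}"

definition inj_map :: "('v::finite \<times> 'v) set \<Rightarrow> real ^ ('v \<times> 'v) \<Rightarrow> real ^ 'v" where
  "inj_map E f = (\<chi> i. \<Sum>k\<in>{k. (i,k) \<in> dir_edges E}. f $ (i,k))"

definition inj_region_theta ::
  "('v::finite \<times> 'v) set \<Rightarrow> ('v \<Rightarrow> real) \<Rightarrow> ('v \<times> 'v \<Rightarrow> real) \<Rightarrow> ('v \<times> 'v \<Rightarrow> real)
   \<Rightarrow> ('v \<times> 'v \<Rightarrow> real) \<Rightarrow> ('v \<times> 'v \<Rightarrow> real) \<Rightarrow> (real ^ 'v) set" where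
  "inj_region_theta E Vm g b \<theta>lo \<theta>hi = inj_map E ` flow_region E Vm g b \<theta>lo \<theta>hi"

definition inj_region_P :: "('v::finite \<Rightarrow> real) \<Rightarrow> ('v \<Rightarrow> real) \<Rightarrow> (real ^ 'v) set" where
  "inj_region_P Plo Phi = {p. \<forall>i. Plo i \<le> p $ i \<and> p $ i \<le> Phi i}"

definition pareto :: "(real ^ 'n) set \<Rightarrow> (real ^ 'n) set" where
  "pareto S = {x \<in> S. \<not> (\<exists>y\<in>S. (\<forall>i. y $ i \<le> x $ i) \<and> (\<exists>i. y $ i < x $ i))}"

text \<open>tan^{-1}(b/g) for g, b \<ge> 0, with the value pi/2 when g = 0 (b/g = +infinity).\<close>
definition atan_ratio :: "real \<Rightarrow> real \<Rightarrow> real" where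
  "atan_ratio b g = (if g = 0 then pi / 2 else arctan (b / g))"

end

theory Submission
  imports Defs
begin

text \<open>For a single line, inside the angle window the map \<open>\<theta> \<mapsto> (P\<^sub>i\<^sub>k, P\<^sub>k\<^sub>i)\<close> traces a curve
  along which \<open>P\<^sub>i\<^sub>k\<close> strictly increases and \<open>P\<^sub>k\<^sub>i\<close> strictly decreases, and every convex
  combination of points of the curve is dominated by a point of the curve. On a tree one peels
  off pendant lines: at a pendant bus only one line contributes, so the injection there pins
  down the angle of that line, and a smaller injection at the pendant bus forces a larger one at
  its neighbour. Induction over pendant lines shows that the injections of two different
  admissible flows are never comparable, which gives uniqueness and \<open>\<P> = \<O>(\<P>)\<close>, and that every
  point of \<open>conv \<P>\<close> dominates a point of \<open>\<P>\<close>, which gives \<open>\<O>(\<P>) = \<O>(conv \<P>)\<close>.\<close>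

section \<open>Pendant lines of a tree\<close>

lemma least_power_predecessor:
  fixes R :: "'a rel"
  assumes "(r, v) \<in> R\<^sup>*" and "v \<noteq> r"
  defines "d \<equiv> \<lambda>x. LEAST n. (r, x) \<in> R ^^ n"
  obtains u where "(u, v) \<in> R" and "d v = Suc (d u)"
proof -
  have path: "(r, x) \<in> R ^^ d x" if "(r, x) \<in> R\<^sup>*" for x
    unfolding d_def by (rule LeastI_ex) (use that rtrancl_power in blast)
  obtain n where n: "d v = Suc n"
    using path[OF assms(1)] assms(2) by (cases "d v") auto
  then obtain u where ru: "(r, u) \<in> R ^^ n" and uv: "(u, v) \<in> R"
    using path[OF assms(1)] by auto
  have "d u \<le> n" unfolding d_def using ru by (rule Least_le)
  moreover have "(r, u) \<in> R\<^sup>*"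
    using ru by (rule relpow_imp_rtrancl)
  then have "(r, v) \<in> R ^^ Suc (d u)"
    using path uv by (meson relpow_Suc_I)
  then have "d v \<le> Suc (d u)"
    unfolding d_def by (rule Least_le)
  ultimately show thesis using that uv n by simp
qed

definition upper_end :: "('v \<Rightarrow> nat) \<Rightarrow> 'v \<times> 'v \<Rightarrow> 'v \<Rightarrow> bool" where
  "upper_end d e v \<longleftrightarrow>
     (v = fst e \<and> d v = Suc (d (snd e))) \<or> (v = snd e \<and> d v = Suc (d (fst e)))"

lemma upper_end_unique: "upper_end d e v \<Longrightarrow> upper_end d e w \<Longrightarrow> v = w"
  unfolding upper_end_def by auto

text \<open>Levels are hop distances from an arbitrary root. Every other bus has a parent line, of
  which it is the upper end; since there are exactly \<open>n - 1\<close> lines, every line arises in this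
  way exactly once.\<close>

lemma tree_network_levels:
  fixes E :: "('v::finite \<times> 'v) set"
  assumes "tree_network E"
  obtains d :: "'v \<Rightarrow> nat"
  where "\<And>e. e \<in> E \<Longrightarrow> \<exists>v. upper_end d e v"
    and "\<And>e e' v. e \<in> E \<Longrightarrow> e' \<in> E \<Longrightarrow> upper_end d e v \<Longrightarrow> upper_end d e' v \<Longrightarrow> e = e'"
proof -
  define r :: 'v where "r = undefined"
  define d where "d v = (LEAST n. (r, v) \<in> (E \<union> E\<inverse>) ^^ n)" for v
  have connected: "(r, v) \<in> (E \<union> E\<inverse>)\<^sup>*" for v
    using assms unfolding tree_network_def by blast
  have "\<exists>e\<in>E. upper_end d e v" if vr: "v \<noteq> r" for v
  proof -
    obtain u where "(u, v) \<in> E \<union> E\<inverse>" "d v = Suc (d u)"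
      using least_power_predecessor[OF connected vr] unfolding d_def by blast
    then show ?thesis unfolding upper_end_def by force
  qed
  then obtain parent where parent: "\<And>v. v \<noteq> r \<Longrightarrow> parent v \<in> E \<and> upper_end d (parent v) v"
    by metis
  have "inj_on parent (UNIV - {r})"
    by (rule inj_onI) (metis DiffD2 parent singletonI upper_end_unique)
  moreover have "parent ` (UNIV - {r}) \<subseteq> E"
    using parent by blast
  moreover have "card E = card (UNIV - {r})"
    using assms unfolding tree_network_def by (simp add: card_Diff_singleton)
  ultimately have onto: "parent ` (UNIV - {r}) = E"
    by (metis card_image card_subset_eq finite)
  show thesis
  proof
    show "\<exists>v. upper_end d e v" if "e \<in> E" for e
      using that onto parent by blast
    have parent_unique: "e = parent v" if "e \<in> E" "upper_end d e v" for e v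
    proof -
      obtain w where w: "w \<noteq> r" "e = parent w" using onto \<open>e \<in> E\<close> by blast
      then have "upper_end d e w" using parent by blast
      then have "w = v" using that(2) by (rule upper_end_unique)
      then show ?thesis using w by simp
    qed
    show "e = e'" if "e \<in> E" "e' \<in> E" "upper_end d e v" "upper_end d e' v" for e e' v
      using parent_unique[OF that(1,3)] parent_unique[OF that(2,4)] by simp
  qed
qed

lemma tree_network_leaf:
  fixes E :: "('v::finite \<times> 'v) set"
  assumes tree: "tree_network E" and "C \<subseteq> E" and "C \<noteq> {}"
  obtains e v where "e \<in> C" and "v \<in> {fst e, snd e}"
    and "\<And>e'. e' \<in> C \<Longrightarrow> v \<in> {fst e', snd e'} \<Longrightarrow> e' = e"
proof -
  obtain d where up: "\<And>e. e \<in> E \<Longrightarrow> \<exists>v. upper_end d e v"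
    and uniq: "\<And>e e' v. e \<in> E \<Longrightarrow> e' \<in> E \<Longrightarrow> upper_end d e v \<Longrightarrow> upper_end d e' v \<Longrightarrow> e = e'"
    using tree_network_levels[OF tree] by blast
  define ends where "ends = fst ` C \<union> snd ` C"
  have "finite ends" "ends \<noteq> {}"
    using \<open>C \<noteq> {}\<close> unfolding ends_def by auto
  then obtain v where v: "v \<in> ends" and "Max (d ` ends) = d v"
    by (rule obtains_MAX)
  then have vmax: "d w \<le> d v" if "w \<in> ends" for w
    using that \<open>finite ends\<close> by (metis Max_ge finite_imageI imageI)
  have upper: "upper_end d e v" if e: "e \<in> C" "v \<in> {fst e, snd e}" for e
  proof -
    obtain c where c: "upper_end d e c" using up e(1) \<open>C \<subseteq> E\<close> by blast
    then have "c \<in> ends" using e(1) unfolding upper_end_def ends_def by auto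
    then have "d c \<le> d v" by (rule vmax)
    then show ?thesis using c e(2) unfolding upper_end_def by auto
  qed
  obtain e where "e \<in> C" "v \<in> {fst e, snd e}" using v unfolding ends_def by auto
  moreover have "e' = e" if "e' \<in> C" "v \<in> {fst e', snd e'}" for e'
    using uniq upper that \<open>e \<in> C\<close> \<open>v \<in> {fst e, snd e}\<close> \<open>C \<subseteq> E\<close> by blast
  ultimately show thesis using that by blast
qed

section \<open>A single line\<close>

lemma atan_ratio_bound_imp_pos:
  fixes G B t :: real
  assumes G: "G \<ge> 0" and B: "B \<ge> 0" and GB: "G \<noteq> 0 \<or> B \<noteq> 0"
    and t: "\<bar>t\<bar> < atan_ratio B G"
  shows "B > 0" and "B * cos t + G * sin t > 0" and "B * cos t - G * sin t > 0"
proof -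
  have "atan_ratio B G \<le> pi / 2"
    unfolding atan_ratio_def using arctan_ubound[of "B / G"] by auto
  then have t_pi: "\<bar>t\<bar> < pi / 2" using t by linarith
  then have cos_pos: "cos t > 0" by (intro cos_gt_zero_pi) auto
  have "B > 0 \<and> G * \<bar>sin t\<bar> < B * cos t"
  proof (cases "G = 0")
    case True
    then show ?thesis using GB B cos_pos by simp
  next
    case False
    then have G_pos: "G > 0" using G by simp
    have "arctan (tan \<bar>t\<bar>) < arctan (B / G)"
      using t t_pi False unfolding atan_ratio_def by (simp add: arctan_tan)
    then have "tan \<bar>t\<bar> < B / G" by (simp add: arctan_less_iff)
    moreover have "sin \<bar>t\<bar> = \<bar>sin t\<bar>"
      using t_pi sin_ge_zero[of t] sin_ge_zero[of "- t"] by (cases "t \<ge> 0") auto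
    then have "tan \<bar>t\<bar> = \<bar>sin t\<bar> / cos t"
      by (simp add: tan_def)
    ultimately have lt: "G * \<bar>sin t\<bar> < B * cos t"
      using G_pos cos_pos by (simp add: field_simps)
    moreover have "0 \<le> G * \<bar>sin t\<bar>" using G_pos by simp
    ultimately have "0 < B * cos t" by linarith
    then show ?thesis using lt cos_pos by (simp add: zero_less_mult_iff)
  qed
  moreover have "\<bar>G * sin t\<bar> = G * \<bar>sin t\<bar>" using G by (simp add: abs_mult)
  ultimately show "B > 0" "B * cos t + G * sin t > 0" "B * cos t - G * sin t > 0"
    by (auto simp: abs_less_iff)
qed

lemma convex_combination_sin_cos_in_disk:
  fixes l \<theta> :: "'j \<Rightarrow> real"
  assumes "\<forall>j\<in>J. l j \<ge> 0" and "sum l J = 1"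
  shows "(\<Sum>j\<in>J. l j * sin (\<theta> j))\<^sup>2 + (\<Sum>j\<in>J. l j * cos (\<theta> j))\<^sup>2 \<le> 1"
proof -
  define z where "z = (\<Sum>j\<in>J. of_real (l j) * cis (\<theta> j))"
  have "norm z \<le> (\<Sum>j\<in>J. norm (of_real (l j) * cis (\<theta> j)))"
    unfolding z_def by (rule norm_sum)
  also have "\<dots> = 1"
    using assms by (simp add: norm_mult)
  finally have "(norm z)\<^sup>2 \<le> 1"
    by (simp add: power_le_one)
  then show ?thesis
    unfolding cmod_power2 z_def by simp
qed

text \<open>The line through \<open>(sin t, cos t)\<close> in direction \<open>(G, B)\<close> leaves the unit disk
  when moving in the positive direction, so disk points on it lie below \<open>(sin t, cos t)\<close>.\<close>

lemma unit_disk_line_le: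
  fixes B G S K t :: real
  assumes disk: "S\<^sup>2 + K\<^sup>2 \<le> 1" and B: "B > 0" and G: "G \<ge> 0"
    and slope: "B * cos t + G * sin t > 0"
    and line: "B * sin t - G * cos t = B * S - G * K"
  shows "G * K \<le> G * cos t"
proof -
  define s where "s = (K - cos t) / B"
  have K: "K = cos t + B * s" using B by (simp add: s_def)
  have "B * S = B * (sin t + G * s)" using line K by (simp add: algebra_simps)
  then have S: "S = sin t + G * s" using B by simp
  have "S\<^sup>2 + K\<^sup>2 = 1 + 2 * s * (B * cos t + G * sin t) + s\<^sup>2 * (G\<^sup>2 + B\<^sup>2)"
    unfolding S K using sin_cos_squared_add[of t] by (simp add: power2_eq_square algebra_simps)
  with disk slope have "s \<le> 0"
    by (smt (verit) mult_pos_pos zero_le_power2 zero_le_mult_iff)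
  then have "G * (B * s) \<le> 0" using B G by (simp add: mult_nonneg_nonpos)
  then show ?thesis unfolding K by (simp add: algebra_simps)
qed

lemma convex_combination_in_interval:
  fixes l h :: "'j \<Rightarrow> real"
  assumes "finite J" "\<forall>j\<in>J. l j \<ge> 0" "sum l J = 1" "\<forall>j\<in>J. h j \<in> {m..M}"
  shows "(\<Sum>j\<in>J. l j * h j) \<in> {m..M}"
  using convex_sum[of J "{m..M}" l h] assms by simp

lemma convex_combination_ge:
  fixes l h :: "'j \<Rightarrow> real"
  assumes "\<forall>j\<in>J. l j \<ge> 0" "sum l J = 1" "\<forall>j\<in>J. m \<le> h j"
  shows "m \<le> (\<Sum>j\<in>J. l j * h j)"
proof -
  have "(\<Sum>j\<in>J. l j * m) \<le> (\<Sum>j\<in>J. l j * h j)"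
    using assms(1,3) by (intro sum_mono mult_left_mono) auto
  then show ?thesis using assms(2) by (simp flip: sum_distrib_right)
qed

lemma convex_combination_add_const:
  fixes l h :: "'j \<Rightarrow> real"
  assumes "sum l J = 1"
  shows "(\<Sum>j\<in>J. l j * (c + h j)) = c + (\<Sum>j\<in>J. l j * h j)"
  using assms by (simp add: distrib_left sum.distrib flip: sum_distrib_right)

text \<open>\<open>P1\<close> and \<open>P2\<close> are the angle-dependent parts of \<open>P\<^sub>i\<^sub>k\<close> and \<open>P\<^sub>k\<^sub>i\<close> for
  \<open>W = V\<^sub>iV\<^sub>k\<close>, \<open>B = b\<^sub>i\<^sub>k\<close>, \<open>G = g\<^sub>i\<^sub>k\<close>.\<close>

locale line_curve =
  fixes W B G lo hi :: real
  assumes W_pos: "W > 0" and B_pos: "B > 0" and G_nonneg: "G \<ge> 0" and lo_le_hi: "lo \<le> hi"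
    and slopes_pos: "\<And>t. t \<in> {lo..hi} \<Longrightarrow> B * cos t + G * sin t > 0 \<and> B * cos t - G * sin t > 0"
begin

definition P1 :: "real \<Rightarrow> real" where
  "P1 t = W * (B * sin t - G * cos t)"

definition P2 :: "real \<Rightarrow> real" where
  "P2 t = - W * (B * sin t + G * cos t)"

lemma continuous_on_P1: "continuous_on S P1"
  unfolding P1_def by (intro continuous_intros)

lemma continuous_on_P2: "continuous_on S P2"
  unfolding P2_def by (intro continuous_intros)

lemma strict_mono_on_P1: "strict_mono_on {lo..hi} P1"
proof (rule strict_mono_onI)
  fix x y assume "x \<in> {lo..hi}" "y \<in> {lo..hi}" "x < y"
  have "(P1 has_real_derivative W * (B * cos t + G * sin t)) (at t)" for t
    unfolding P1_def by (auto intro!: derivative_eq_intros simp: algebra_simps)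
  moreover have "W * (B * cos t + G * sin t) > 0" if "x \<le> t" "t \<le> y" for t
    using slopes_pos[of t] W_pos \<open>x \<in> {lo..hi}\<close> \<open>y \<in> {lo..hi}\<close> that by simp
  ultimately show "P1 x < P1 y"
    using \<open>x < y\<close> by (blast intro: DERIV_pos_imp_increasing)
qed

lemma strict_mono_on_neg_P2: "strict_mono_on {lo..hi} (\<lambda>t. - P2 t)"
proof (rule strict_mono_onI)
  fix x y assume "x \<in> {lo..hi}" "y \<in> {lo..hi}" "x < y"
  have der: "((\<lambda>t. - P2 t) has_real_derivative W * (B * cos t - G * sin t)) (at t)" for t
    unfolding P2_def by (auto intro!: derivative_eq_intros simp: algebra_simps)
  have pos: "W * (B * cos t - G * sin t) > 0" if "x \<le> t" "t \<le> y" for t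
    using slopes_pos[of t] W_pos \<open>x \<in> {lo..hi}\<close> \<open>y \<in> {lo..hi}\<close> that by simp
  show "- P2 x < - P2 y"
    using DERIV_pos_imp_increasing[where f = "\<lambda>t. - P2 t", OF \<open>x < y\<close>] der pos by blast
qed

lemma P1_le_iff: "x \<in> {lo..hi} \<Longrightarrow> y \<in> {lo..hi} \<Longrightarrow> P1 x \<le> P1 y \<longleftrightarrow> x \<le> y"
  using strict_mono_on_P1 by (rule strict_mono_on_less_eq)

lemma P2_le_iff: "x \<in> {lo..hi} \<Longrightarrow> y \<in> {lo..hi} \<Longrightarrow> P2 x \<le> P2 y \<longleftrightarrow> y \<le> x"
  using strict_mono_on_less_eq[OF strict_mono_on_neg_P2, of y x] by simp

text \<open>The averaged point \<open>(S, K)\<close> of the unit circle lies in the unit disk; the curve point with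
  the same \<open>P1\<close>-value is compared with it by \<open>unit_disk_line_le\<close>.\<close>

lemma convex_combination_dominated:
  fixes l \<theta> :: "'j \<Rightarrow> real"
  assumes J: "finite J" "\<forall>j\<in>J. l j \<ge> 0" "sum l J = 1" and \<theta>: "\<forall>j\<in>J. \<theta> j \<in> {lo..hi}"
  obtains t where "t \<in> {lo..hi}" "P1 t = (\<Sum>j\<in>J. l j * P1 (\<theta> j))"
    "P2 t \<le> (\<Sum>j\<in>J. l j * P2 (\<theta> j))"
proof -
  define S where "S = (\<Sum>j\<in>J. l j * sin (\<theta> j))"
  define K where "K = (\<Sum>j\<in>J. l j * cos (\<theta> j))"
  have avg1: "(\<Sum>j\<in>J. l j * P1 (\<theta> j)) = W * (B * S - G * K)"
    unfolding P1_def S_def K_def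
    by (simp add: algebra_simps sum.distrib sum_subtractf sum_distrib_left)
  have avg2: "(\<Sum>j\<in>J. l j * P2 (\<theta> j)) = - W * (B * S + G * K)"
    unfolding P2_def S_def K_def
    by (simp add: algebra_simps sum.distrib sum_subtractf sum_distrib_left sum_negf)
  have "(\<Sum>j\<in>J. l j * P1 (\<theta> j)) \<in> {P1 lo..P1 hi}"
    using J \<theta> P1_le_iff lo_le_hi by (intro convex_combination_in_interval) auto
  then obtain t where t: "t \<in> {lo..hi}" "P1 t = (\<Sum>j\<in>J. l j * P1 (\<theta> j))"
    using IVT'[of P1 lo _ hi] lo_le_hi continuous_on_P1 by auto
  then have line: "B * sin t - G * cos t = B * S - G * K"
    using avg1 W_pos unfolding P1_def by simp
  have "G * K \<le> G * cos t"
    using convex_combination_sin_cos_in_disk[OF J(2,3)] B_pos G_nonneg slopes_pos[OF t(1)] line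
    unfolding S_def K_def by (intro unit_disk_line_le) auto
  then have "B * S + G * K \<le> B * sin t + G * cos t"
    using line by linarith
  then have "P2 t \<le> (\<Sum>j\<in>J. l j * P2 (\<theta> j))"
    using W_pos unfolding avg2 by (simp add: P2_def)
  with t show thesis by (rule that)
qed

text \<open>The values \<open>P2 t\<close> for \<open>t\<close> between the smallest angle \<open>\<theta> j\<^sub>0\<close> and the dominating point of
  \<open>convex_combination_dominated\<close> fill an interval \<open>{s1..s2}\<close>, while \<open>P1 t\<close> stays between
  \<open>P1 (\<theta> j\<^sub>0)\<close> and the average of \<open>P1\<close>.\<close>

lemma convex_combination_tradeoff:
  fixes l \<theta> :: "'j \<Rightarrow> real"
  assumes J: "finite J" "\<forall>j\<in>J. l j \<ge> 0" "sum l J = 1" and \<theta>: "\<forall>j\<in>J. \<theta> j \<in> {lo..hi}"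
  obtains s1 s2 where "s1 \<le> s2" "s1 \<le> (\<Sum>j\<in>J. l j * P2 (\<theta> j))" "\<forall>j\<in>J. P2 (\<theta> j) \<le> s2"
    "\<And>s. s \<in> {s1..s2} \<Longrightarrow> \<exists>t\<in>{lo..hi}. P2 t = s \<and> (\<exists>j\<in>J. P1 (\<theta> j) \<le> P1 t)
           \<and> P1 t \<le> (\<Sum>j\<in>J. l j * P1 (\<theta> j))"
proof -
  obtain ts where ts: "ts \<in> {lo..hi}" "P1 ts = (\<Sum>j\<in>J. l j * P1 (\<theta> j))"
    "P2 ts \<le> (\<Sum>j\<in>J. l j * P2 (\<theta> j))"
    using convex_combination_dominated[OF J \<theta>] by blast
  have "J \<noteq> {}" using J(3) by auto
  with J(1) obtain j0 where j0: "j0 \<in> J" "Min (\<theta> ` J) = \<theta> j0"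
    by (rule obtains_MIN)
  then have j0_min: "\<theta> j0 \<le> \<theta> j" if "j \<in> J" for j
    using that J(1) by (metis Min_le finite_imageI imageI)
  have "(\<Sum>j\<in>J. l j * P1 (\<theta> j)) \<in> {P1 (\<theta> j0)..P1 hi}"
    using J \<theta> j0 j0_min P1_le_iff by (intro convex_combination_in_interval) auto
  then have "P1 (\<theta> j0) \<le> P1 ts" using ts(2) by simp
  then have j0_ts: "\<theta> j0 \<le> ts"
    using P1_le_iff[of "\<theta> j0" ts] \<theta> j0(1) ts(1) by simp
  show thesis
  proof
    show "P2 ts \<le> P2 (\<theta> j0)"
      using P2_le_iff \<theta> j0(1) ts(1) j0_ts by blast
    show "P2 ts \<le> (\<Sum>j\<in>J. l j * P2 (\<theta> j))" by (fact ts(3))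
    show "\<forall>j\<in>J. P2 (\<theta> j) \<le> P2 (\<theta> j0)"
      using P2_le_iff \<theta> j0(1) j0_min by blast
    fix s assume "s \<in> {P2 ts..P2 (\<theta> j0)}"
    then obtain t where t: "\<theta> j0 \<le> t" "t \<le> ts" "P2 t = s"
      using IVT2'[of P2 ts s "\<theta> j0"] j0_ts continuous_on_P2 by auto
    have "t \<in> {lo..hi}" using t ts(1) \<theta> j0(1) by auto
    moreover have "P1 (\<theta> j0) \<le> P1 t" "P1 t \<le> P1 ts"
      using P1_le_iff \<open>t \<in> {lo..hi}\<close> \<theta> j0(1) ts(1) t by blast+
    ultimately show "\<exists>t\<in>{lo..hi}. P2 t = s \<and> (\<exists>j\<in>J. P1 (\<theta> j) \<le> P1 t)
        \<and> P1 t \<le> (\<Sum>j\<in>J. l j * P1 (\<theta> j))"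
      using t(3) ts(2) j0(1) by auto
  qed
qed

end

section \<open>Flows on a tree network\<close>

definition line_flow :: "('v \<Rightarrow> real) \<Rightarrow> ('v \<times> 'v \<Rightarrow> real) \<Rightarrow> ('v \<times> 'v \<Rightarrow> real)
    \<Rightarrow> 'v \<times> 'v \<Rightarrow> 'v \<Rightarrow> real \<Rightarrow> real" where
  "line_flow Vm g b e w \<theta> =
     (if w = fst e then flow_ik Vm g b (fst e) (snd e) \<theta>
      else if w = snd e then flow_ki Vm g b (fst e) (snd e) \<theta> else 0)"

definition endpoints :: "'v \<times> 'v \<Rightarrow> 'v \<Rightarrow> 'v \<Rightarrow> bool" where
  "endpoints e v u \<longleftrightarrow> e = (v, u) \<or> e = (u, v)"

lemma endpoints_sym: "endpoints e v u \<Longrightarrow> endpoints e u v"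
  unfolding endpoints_def by auto

locale power_tree =
  fixes E :: "('v::finite \<times> 'v) set"
    and Vm :: "'v \<Rightarrow> real"
    and g b \<theta>lo \<theta>hi :: "'v \<times> 'v \<Rightarrow> real"
  assumes tree: "tree_network E"
    and Vpos: "\<forall>i. Vm i > 0"
    and gb_nonneg: "\<forall>e\<in>E. g e \<ge> 0 \<and> b e \<ge> 0"
    and y_nonzero: "\<forall>e\<in>E. g e \<noteq> 0 \<or> b e \<noteq> 0"
    and angle_cond: "\<forall>e\<in>E. - atan_ratio (b e) (g e) < \<theta>lo e \<and> \<theta>lo e \<le> \<theta>hi e
                          \<and> \<theta>hi e < atan_ratio (b e) (g e)"
begin

abbreviation flow :: "'v \<times> 'v \<Rightarrow> 'v \<Rightarrow> real \<Rightarrow> real" where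
  "flow \<equiv> line_flow Vm g b"

lemma edge_not_reversed: "(i, k) \<in> E \<Longrightarrow> (k, i) \<notin> E"
  using tree unfolding tree_network_def by auto

lemma edge_not_loop: "e \<in> E \<Longrightarrow> fst e \<noteq> snd e"
  using tree unfolding tree_network_def by auto

lemma line_curve_edge:
  assumes "e \<in> E" "lo \<le> hi" "\<And>t. t \<in> {lo..hi} \<Longrightarrow> \<bar>t\<bar> < atan_ratio (b e) (g e)"
  shows "line_curve (Vm (fst e) * Vm (snd e)) (b e) (g e) lo hi"
proof unfold_locales
  have ge: "g e \<ge> 0" "b e \<ge> 0" "g e \<noteq> 0 \<or> b e \<noteq> 0"
    using assms(1) gb_nonneg y_nonzero by auto
  note pos = atan_ratio_bound_imp_pos[OF ge]
  show "0 < Vm (fst e) * Vm (snd e)" using Vpos by simp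
  show "0 < b e" using pos(1) assms(2) assms(3)[of lo] by simp
  show "0 \<le> g e" by (fact ge(1))
  show "lo \<le> hi" by (fact assms(2))
  show "b e * cos t + g e * sin t > 0 \<and> b e * cos t - g e * sin t > 0" if "t \<in> {lo..hi}" for t
    using pos(2,3) assms(3)[OF that] by simp
qed

text \<open>Seen from either endpoint \<open>v\<close> of a line, the flows at \<open>v\<close> and at the other endpoint \<open>u\<close>
  form a \<open>line_curve\<close>, up to the angle reversal \<open>\<sigma> = uminus\<close> when \<open>v\<close> is the second
  component of the line.\<close>

lemma endpoint_curve:
  assumes e: "e \<in> E" and vu: "endpoints e v u"
  obtains W B G lo hi :: real and \<sigma> :: "real \<Rightarrow> real" and cv cu :: real
  where "line_curve W B G lo hi"
    and "\<And>t. \<sigma> (\<sigma> t) = t"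
    and "\<And>t. t \<in> {\<theta>lo e..\<theta>hi e} \<longleftrightarrow> \<sigma> t \<in> {lo..hi}"
    and "\<And>t. flow e v t = cv + line_curve.P1 W B G (\<sigma> t)"
    and "\<And>t. flow e u t = cu + line_curve.P2 W B G (\<sigma> t)"
proof -
  have window: "\<bar>t\<bar> < atan_ratio (b e) (g e)" if "t \<in> {\<theta>lo e..\<theta>hi e}" for t
    using angle_cond e that by auto
  have uv: "u \<noteq> v" using vu edge_not_loop[OF e] unfolding endpoints_def by auto
  consider "e = (v, u)" | "e = (u, v)" using vu unfolding endpoints_def by blast
  then show thesis
  proof cases
    case 1
    have lc: "line_curve (Vm v * Vm u) (b e) (g e) (\<theta>lo e) (\<theta>hi e)"
      using line_curve_edge[OF e] angle_cond e window 1 by simp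
    show thesis
      by (rule that[where \<sigma> = id and cv = "(Vm v)\<^sup>2 * g e" and cu = "(Vm u)\<^sup>2 * g e", OF lc])
        (unfold line_curve.P1_def[OF lc] line_curve.P2_def[OF lc],
          use 1 uv in \<open>simp_all add: line_flow_def flow_ik_def flow_ki_def algebra_simps\<close>)
  next
    case 2
    have "- \<theta>hi e \<le> - \<theta>lo e" using angle_cond e by auto
    moreover have "\<bar>t\<bar> < atan_ratio (b e) (g e)" if "t \<in> {- \<theta>hi e..- \<theta>lo e}" for t
      using window[of "- t"] that by auto
    ultimately have lc: "line_curve (Vm u * Vm v) (b e) (g e) (- \<theta>hi e) (- \<theta>lo e)"
      using line_curve_edge[OF e] 2 by simp
    show thesis
      by (rule that[where \<sigma> = uminus and cv = "(Vm v)\<^sup>2 * g e" and cu = "(Vm u)\<^sup>2 * g e", OF lc])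
        (unfold line_curve.P1_def[OF lc] line_curve.P2_def[OF lc],
          use 2 uv in \<open>simp_all add: line_flow_def flow_ik_def flow_ki_def algebra_simps conj_commute\<close>)
  qed
qed

lemma line_flow_le_swap:
  assumes "e \<in> E" "endpoints e v u" "x \<in> {\<theta>lo e..\<theta>hi e}" "y \<in> {\<theta>lo e..\<theta>hi e}"
    and "flow e v x \<le> flow e v y"
  shows "flow e u y \<le> flow e u x"
proof -
  obtain W B G lo hi :: real and \<sigma> :: "real \<Rightarrow> real" and cv cu :: real
    where "line_curve W B G lo hi"
    and "\<And>t. \<sigma> (\<sigma> t) = t"
    and range: "\<And>t. t \<in> {\<theta>lo e..\<theta>hi e} \<longleftrightarrow> \<sigma> t \<in> {lo..hi}"
    and flow_v: "\<And>t. flow e v t = cv + line_curve.P1 W B G (\<sigma> t)"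
    and flow_u: "\<And>t. flow e u t = cu + line_curve.P2 W B G (\<sigma> t)"
    using endpoint_curve[OF assms(1,2)] by blast
  interpret line_curve W B G lo hi by fact
  have "\<sigma> x \<in> {lo..hi}" "\<sigma> y \<in> {lo..hi}"
    using assms(3,4) range by blast+
  moreover have "P1 (\<sigma> x) \<le> P1 (\<sigma> y)"
    using assms(5) unfolding flow_v by simp
  ultimately have "P2 (\<sigma> y) \<le> P2 (\<sigma> x)"
    using P1_le_iff P2_le_iff by simp
  then show ?thesis unfolding flow_u by simp
qed

lemma line_flow_inj:
  assumes "e \<in> E" "endpoints e v u" "x \<in> {\<theta>lo e..\<theta>hi e}" "y \<in> {\<theta>lo e..\<theta>hi e}"
    and "flow e v x = flow e v y"
  shows "x = y"
proof -
  obtain W B G lo hi :: real and \<sigma> :: "real \<Rightarrow> real" and cv cu :: real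
    where "line_curve W B G lo hi"
    and inv: "\<And>t. \<sigma> (\<sigma> t) = t"
    and range: "\<And>t. t \<in> {\<theta>lo e..\<theta>hi e} \<longleftrightarrow> \<sigma> t \<in> {lo..hi}"
    and flow_v: "\<And>t. flow e v t = cv + line_curve.P1 W B G (\<sigma> t)"
    and "\<And>t. flow e u t = cu + line_curve.P2 W B G (\<sigma> t)"
    using endpoint_curve[OF assms(1,2)] by blast
  interpret line_curve W B G lo hi by fact
  have "\<sigma> x \<in> {lo..hi}" "\<sigma> y \<in> {lo..hi}"
    using assms(3,4) range by blast+
  moreover have "P1 (\<sigma> x) = P1 (\<sigma> y)"
    using assms(5) unfolding flow_v by simp
  ultimately have "\<sigma> x = \<sigma> y"
    using strict_mono_on_P1 by (metis strict_mono_on_eqD)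
  then show ?thesis by (metis inv)
qed

lemma line_flow_convex_tradeoff:
  fixes l \<theta> :: "'j \<Rightarrow> real"
  assumes e: "e \<in> E" and vu: "endpoints e v u"
    and J: "finite J" "\<forall>j\<in>J. l j \<ge> 0" "sum l J = 1" and \<theta>: "\<forall>j\<in>J. \<theta> j \<in> {\<theta>lo e..\<theta>hi e}"
    and lower: "\<forall>j\<in>J. m \<le> flow e v (\<theta> j)" and upper: "(\<Sum>j\<in>J. l j * flow e v (\<theta> j)) \<le> M"
  obtains s1 s2 where "s1 \<le> s2" "s1 \<le> (\<Sum>j\<in>J. l j * flow e u (\<theta> j))"
    "\<forall>j\<in>J. flow e u (\<theta> j) \<le> s2"
    "\<And>s. s \<in> {s1..s2} \<Longrightarrow> \<exists>t\<in>{\<theta>lo e..\<theta>hi e}. flow e u t = s \<and> m \<le> flow e v t \<and> flow e v t \<le> M"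
proof -
  obtain W B G lo hi :: real and \<sigma> :: "real \<Rightarrow> real" and cv cu :: real
    where "line_curve W B G lo hi"
    and inv: "\<And>t. \<sigma> (\<sigma> t) = t"
    and range: "\<And>t. t \<in> {\<theta>lo e..\<theta>hi e} \<longleftrightarrow> \<sigma> t \<in> {lo..hi}"
    and flow_v: "\<And>t. flow e v t = cv + line_curve.P1 W B G (\<sigma> t)"
    and flow_u: "\<And>t. flow e u t = cu + line_curve.P2 W B G (\<sigma> t)"
    using endpoint_curve[OF e vu] by blast
  interpret line_curve W B G lo hi by fact
  have "\<forall>j\<in>J. \<sigma> (\<theta> j) \<in> {lo..hi}" using \<theta> range by blast
  from convex_combination_tradeoff[OF J this]
  obtain s1 s2 where s: "s1 \<le> s2" "s1 \<le> (\<Sum>j\<in>J. l j * P2 (\<sigma> (\<theta> j)))"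
    "\<forall>j\<in>J. P2 (\<sigma> (\<theta> j)) \<le> s2"
    and between: "\<And>s. s \<in> {s1..s2} \<Longrightarrow> \<exists>t\<in>{lo..hi}. P2 t = s
           \<and> (\<exists>j\<in>J. P1 (\<sigma> (\<theta> j)) \<le> P1 t) \<and> P1 t \<le> (\<Sum>j\<in>J. l j * P1 (\<sigma> (\<theta> j)))"
    by blast
  show thesis
  proof (rule that[of "cu + s1" "cu + s2"])
    show "cu + s1 \<le> cu + s2" using s(1) by simp
    show "cu + s1 \<le> (\<Sum>j\<in>J. l j * flow e u (\<theta> j))"
      unfolding flow_u convex_combination_add_const[OF J(3)] using s(2) by simp
    show "\<forall>j\<in>J. flow e u (\<theta> j) \<le> cu + s2"
      unfolding flow_u using s(3) by simp
    fix s assume "s \<in> {cu + s1..cu + s2}"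
    then have "s - cu \<in> {s1..s2}" by auto
    then obtain t j where t: "t \<in> {lo..hi}" "P2 t = s - cu" "j \<in> J"
      "P1 (\<sigma> (\<theta> j)) \<le> P1 t" "P1 t \<le> (\<Sum>j\<in>J. l j * P1 (\<sigma> (\<theta> j)))"
      using between by blast
    have "m \<le> cv + P1 t"
      using lower t(3,4) unfolding flow_v by force
    moreover have "cv + P1 t \<le> M"
      using upper t(5) unfolding flow_v convex_combination_add_const[OF J(3)] by simp
    ultimately show "\<exists>t\<in>{\<theta>lo e..\<theta>hi e}. flow e u t = s \<and> m \<le> flow e v t \<and> flow e v t \<le> M"
      unfolding flow_v flow_u using range inv t(1,2) by (intro bexI[of _ "\<sigma> t"]) auto
  qed
qed

definition injection :: "('v \<times> 'v) set \<Rightarrow> ('v \<times> 'v \<Rightarrow> real) \<Rightarrow> 'v \<Rightarrow> real" where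
  "injection C \<theta> w = (\<Sum>e\<in>C. flow e w (\<theta> e))"

definition admissible :: "('v \<times> 'v) set \<Rightarrow> ('v \<times> 'v \<Rightarrow> real) \<Rightarrow> bool" where
  "admissible C \<theta> \<longleftrightarrow> (\<forall>e\<in>C. \<theta> e \<in> {\<theta>lo e..\<theta>hi e})"

lemma finite_edges: "C \<subseteq> E \<Longrightarrow> finite C"
  by (rule finite_subset) simp_all

lemma injection_remove:
  "C \<subseteq> E \<Longrightarrow> e \<in> C \<Longrightarrow> injection C \<theta> w = injection (C - {e}) \<theta> w + flow e w (\<theta> e)"
  unfolding injection_def by (simp add: sum.remove finite_edges)

lemma injection_cong: "(\<And>e. e \<in> C \<Longrightarrow> \<theta> e = \<theta>' e) \<Longrightarrow> injection C \<theta> w = injection C \<theta>' w"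
  unfolding injection_def by (rule sum.cong) simp_all

lemma admissible_subset: "admissible C \<theta> \<Longrightarrow> C' \<subseteq> C \<Longrightarrow> admissible C' \<theta>"
  unfolding admissible_def by blast

definition pendant :: "('v \<times> 'v) set \<Rightarrow> 'v \<times> 'v \<Rightarrow> 'v \<Rightarrow> 'v \<Rightarrow> bool" where
  "pendant C e v u \<longleftrightarrow> e \<in> C \<and> endpoints e v u \<and> u \<noteq> v
     \<and> (\<forall>\<theta>. injection (C - {e}) \<theta> v = 0) \<and> (\<forall>w t. w \<noteq> u \<longrightarrow> w \<noteq> v \<longrightarrow> flow e w t = 0)"

lemma exists_pendant:
  assumes "C \<subseteq> E" "C \<noteq> {}"
  obtains e v u where "pendant C e v u"
proof -
  obtain e v where e: "e \<in> C" "v \<in> {fst e, snd e}"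
    and leaf: "\<And>e'. e' \<in> C \<Longrightarrow> v \<in> {fst e', snd e'} \<Longrightarrow> e' = e"
    using tree_network_leaf[OF tree assms] by blast
  define u where "u = (if v = fst e then snd e else fst e)"
  have "fst e \<noteq> snd e" using edge_not_loop e(1) assms(1) by blast
  then have "endpoints e v u" "u \<noteq> v"
    using e(2) unfolding endpoints_def u_def by (auto simp: prod_eq_iff)
  moreover have "injection (C - {e}) \<theta> v = 0" for \<theta>
    unfolding injection_def line_flow_def using leaf by (intro sum.neutral) auto
  moreover have "flow e w t = 0" if "w \<noteq> u" "w \<noteq> v" for w t
    using that e(2) unfolding line_flow_def u_def by auto
  ultimately show thesis using that e(1) unfolding pendant_def by blast
qed

text \<open>At the pendant bus \<open>v\<close> only the line \<open>e\<close> contributes, and the trade-off along \<open>e\<close>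
  pushes the comparison to its other endpoint \<open>u\<close>.\<close>

lemma injection_le_imp_eq:
  assumes "C \<subseteq> E" "admissible C \<theta>" "admissible C \<theta>'"
    and "\<And>w. injection C \<theta>' w \<le> injection C \<theta> w"
  shows "\<forall>e\<in>C. \<theta>' e = \<theta> e"
  using finite_edges[OF assms(1)] assms
proof (induction C rule: finite_remove_induct)
  case empty
  then show ?case by simp
next
  case (remove C)
  obtain e v u where "pendant C e v u"
    using exists_pendant[OF remove.prems(1) remove.hyps(2)] by blast
  then have e: "e \<in> C" and vu: "endpoints e v u"
    and leaf: "\<And>\<theta>. injection (C - {e}) \<theta> v = 0"
    and off: "\<And>w t. w \<noteq> u \<Longrightarrow> w \<noteq> v \<Longrightarrow> flow e w t = 0"
    unfolding pendant_def by blast+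
  have eE: "e \<in> E" using e remove.prems(1) by blast
  have range: "\<theta> e \<in> {\<theta>lo e..\<theta>hi e}" "\<theta>' e \<in> {\<theta>lo e..\<theta>hi e}"
    using remove.prems(2,3) e unfolding admissible_def by blast+
  note split = injection_remove[OF remove.prems(1) e]
  have "flow e v (\<theta>' e) \<le> flow e v (\<theta> e)"
    using remove.prems(4)[of v] unfolding split leaf by simp
  then have u_le: "flow e u (\<theta> e) \<le> flow e u (\<theta>' e)"
    using line_flow_le_swap[OF eE vu range(2,1)] by blast
  have "injection (C - {e}) \<theta>' w \<le> injection (C - {e}) \<theta> w" for w
    using remove.prems(4)[of w] u_le leaf off[of w] unfolding split
    by (cases "w = u"; cases "w = v") auto
  then have rest: "\<forall>e'\<in>C - {e}. \<theta>' e' = \<theta> e'"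
    using remove.prems(1-3) by (intro remove.IH[OF e]) (auto intro: admissible_subset)
  then have "injection (C - {e}) \<theta>' u = injection (C - {e}) \<theta> u"
    by (intro injection_cong) simp
  then have "flow e u (\<theta>' e) = flow e u (\<theta> e)"
    using remove.prems(4)[of u] u_le unfolding split by simp
  then have "\<theta>' e = \<theta> e"
    using line_flow_inj[OF eE endpoints_sym[OF vu] range(2,1)] by blast
  with rest show ?case by blast
qed

lemma pendant_reduce_bounds:
  fixes l :: "'j \<Rightarrow> real" and \<Theta> :: "'j \<Rightarrow> 'v \<times> 'v \<Rightarrow> real"
  assumes "C \<subseteq> E" and p: "pendant C e v u"
    and lb: "\<forall>j\<in>J. \<forall>w. lb w \<le> injection C (\<Theta> j) w"
    and ub: "\<forall>w. (\<Sum>j\<in>J. l j * injection C (\<Theta> j) w) \<le> ub w"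
    and s: "\<forall>j\<in>J. flow e u (\<Theta> j e) \<le> s2" "s1 \<le> (\<Sum>j\<in>J. l j * flow e u (\<Theta> j e))"
  shows "\<forall>j\<in>J. \<forall>w. (lb(u := lb u - s2, v := 0)) w \<le> injection (C - {e}) (\<Theta> j) w"
    and "\<forall>w. (\<Sum>j\<in>J. l j * injection (C - {e}) (\<Theta> j) w) \<le> (ub(u := ub u - s1, v := 0)) w"
proof -
  have e: "e \<in> C" and "u \<noteq> v" and leaf: "\<And>\<theta>. injection (C - {e}) \<theta> v = 0"
    and off: "\<And>w t. w \<noteq> u \<Longrightarrow> w \<noteq> v \<Longrightarrow> flow e w t = 0"
    using p unfolding pendant_def by blast+
  note split = injection_remove[OF assms(1) e]
  show "\<forall>j\<in>J. \<forall>w. (lb(u := lb u - s2, v := 0)) w \<le> injection (C - {e}) (\<Theta> j) w"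
  proof (intro ballI allI)
    fix j w assume j: "j \<in> J"
    have "lb w \<le> injection (C - {e}) (\<Theta> j) w + flow e w (\<Theta> j e)"
      using lb j unfolding split by blast
    then show "(lb(u := lb u - s2, v := 0)) w \<le> injection (C - {e}) (\<Theta> j) w"
      using s(1) j leaf off[of w] \<open>u \<noteq> v\<close> by (cases "w = u"; cases "w = v") auto
  qed
  show "\<forall>w. (\<Sum>j\<in>J. l j * injection (C - {e}) (\<Theta> j) w) \<le> (ub(u := ub u - s1, v := 0)) w"
  proof
    fix w
    have "(\<Sum>j\<in>J. l j * injection (C - {e}) (\<Theta> j) w) + (\<Sum>j\<in>J. l j * flow e w (\<Theta> j e)) \<le> ub w"
      using ub unfolding split by (simp add: distrib_left sum.distrib)
    then show "(\<Sum>j\<in>J. l j * injection (C - {e}) (\<Theta> j) w) \<le> (ub(u := ub u - s1, v := 0)) w"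
      using s(2) leaf off[of w] \<open>u \<noteq> v\<close> by (cases "w = u"; cases "w = v") auto
  qed
qed

lemma pendant_extend:
  assumes "C \<subseteq> E" and p: "pendant C e v u"
    and \<theta>: "admissible (C - {e}) \<theta>"
    and bounds: "\<And>w. (lb(u := lb u - s2, v := 0)) w \<le> injection (C - {e}) \<theta> w
                   \<and> injection (C - {e}) \<theta> w \<le> (ub(u := ub u - s1, v := 0)) w"
    and "s1 \<le> s2" "lb u \<le> ub u"
    and curve: "\<And>s. s \<in> {s1..s2} \<Longrightarrow>
                  \<exists>t\<in>{\<theta>lo e..\<theta>hi e}. flow e u t = s \<and> lb v \<le> flow e v t \<and> flow e v t \<le> ub v"
  shows "\<exists>\<theta>'. admissible C \<theta>' \<and> (\<forall>w. lb w \<le> injection C \<theta>' w \<and> injection C \<theta>' w \<le> ub w)"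
proof -
  have e: "e \<in> C" and "u \<noteq> v" and leaf: "\<And>\<theta>. injection (C - {e}) \<theta> v = 0"
    and off: "\<And>w t. w \<noteq> u \<Longrightarrow> w \<noteq> v \<Longrightarrow> flow e w t = 0"
    using p unfolding pendant_def by blast+
  define R where "R = injection (C - {e}) \<theta> u"
  have "lb u - s2 \<le> R" "R \<le> ub u - s1"
    using bounds[of u] \<open>u \<noteq> v\<close> unfolding R_def by auto
  then have "max s1 (lb u - R) \<in> {s1..s2}"
    using \<open>s1 \<le> s2\<close> by auto
  then obtain t where t: "t \<in> {\<theta>lo e..\<theta>hi e}" "flow e u t = max s1 (lb u - R)"
    "lb v \<le> flow e v t" "flow e v t \<le> ub v"
    using curve by blast
  define \<theta>' where "\<theta>' = \<theta>(e := t)"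
  have split: "injection C \<theta>' w = injection (C - {e}) \<theta> w + flow e w t" for w
  proof -
    have "injection (C - {e}) \<theta>' w = injection (C - {e}) \<theta> w"
      by (rule injection_cong) (simp add: \<theta>'_def)
    then show ?thesis unfolding injection_remove[OF assms(1) e] by (simp add: \<theta>'_def)
  qed
  have "admissible C \<theta>'"
    using \<theta> t(1) unfolding admissible_def \<theta>'_def by auto
  moreover have "lb w \<le> injection C \<theta>' w \<and> injection C \<theta>' w \<le> ub w" for w
  proof (cases "w = u \<or> w = v")
    case True
    then show ?thesis
      using t \<open>R \<le> ub u - s1\<close> \<open>lb u \<le> ub u\<close> leaf unfolding split R_def by auto
  next
    case False
    then show ?thesis
      using bounds[of w] off[of w t] unfolding split by simp
  qed
  ultimately show ?thesis by blast
qed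

text \<open>The bounds at the pendant bus \<open>v\<close> are met by the angles provided by
  \<open>line_flow_convex_tradeoff\<close>, and the range \<open>{s1..s2}\<close> they leave for the flow at the other
  endpoint \<open>u\<close> is passed on to the remaining lines as a shift of the bounds at \<open>u\<close>.\<close>

lemma injection_between_convex_combination:
  fixes l :: "'j \<Rightarrow> real" and \<Theta> :: "'j \<Rightarrow> 'v \<times> 'v \<Rightarrow> real"
  assumes "C \<subseteq> E" and J: "finite J" "\<forall>j\<in>J. l j \<ge> 0" "sum l J = 1"
    and "\<forall>j\<in>J. admissible C (\<Theta> j)"
    and "\<forall>j\<in>J. \<forall>w. lb w \<le> injection C (\<Theta> j) w"
    and "\<forall>w. (\<Sum>j\<in>J. l j * injection C (\<Theta> j) w) \<le> ub w"
  shows "\<exists>\<theta>. admissible C \<theta> \<and> (\<forall>w. lb w \<le> injection C \<theta> w \<and> injection C \<theta> w \<le> ub w)"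
  using finite_edges[OF assms(1)] assms(1,5-)
proof (induction C arbitrary: lb ub rule: finite_remove_induct)
  case empty
  have "J \<noteq> {}" using J(3) by auto
  then show ?case
    using empty.prems(3,4) J(3) by (auto simp: injection_def admissible_def)
next
  case (remove C)
  obtain e v u where p: "pendant C e v u"
    using exists_pendant[OF remove.prems(1) remove.hyps(2)] by blast
  then have e: "e \<in> C" and vu: "endpoints e v u"
    and leaf: "\<And>\<theta>. injection (C - {e}) \<theta> v = 0"
    unfolding pendant_def by blast+
  have eE: "e \<in> E" using e remove.prems(1) by blast
  note split = injection_remove[OF remove.prems(1) e]
  have at_v: "injection C \<theta> v = flow e v (\<theta> e)" for \<theta>
    unfolding split leaf by simp
  have range: "\<forall>j\<in>J. \<Theta> j e \<in> {\<theta>lo e..\<theta>hi e}"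
    using remove.prems(2) e unfolding admissible_def by blast
  have lb_v: "\<forall>j\<in>J. lb v \<le> flow e v (\<Theta> j e)"
    using remove.prems(3) unfolding at_v[symmetric] by blast
  have ub_v: "(\<Sum>j\<in>J. l j * flow e v (\<Theta> j e)) \<le> ub v"
    using remove.prems(4) unfolding at_v[symmetric] by blast
  from line_flow_convex_tradeoff[OF eE vu J range lb_v ub_v]
  obtain s1 s2 where s: "s1 \<le> s2" "s1 \<le> (\<Sum>j\<in>J. l j * flow e u (\<Theta> j e))"
    "\<forall>j\<in>J. flow e u (\<Theta> j e) \<le> s2"
    and curve: "\<And>s. s \<in> {s1..s2} \<Longrightarrow>
           \<exists>t\<in>{\<theta>lo e..\<theta>hi e}. flow e u t = s \<and> lb v \<le> flow e v t \<and> flow e v t \<le> ub v"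
    by blast
  have "C - {e} \<subseteq> E" "\<forall>j\<in>J. admissible (C - {e}) (\<Theta> j)"
    using remove.prems(1,2) by (auto intro: admissible_subset)
  from remove.IH[OF e this pendant_reduce_bounds[OF remove.prems(1) p remove.prems(3,4) s(3,2)]]
  obtain \<theta> where "admissible (C - {e}) \<theta>"
    "\<forall>w. (lb(u := lb u - s2, v := 0)) w \<le> injection (C - {e}) \<theta> w
        \<and> injection (C - {e}) \<theta> w \<le> (ub(u := ub u - s1, v := 0)) w"
    by blast
  moreover have "lb u \<le> ub u"
    using convex_combination_ge[OF J(2,3)] remove.prems(3,4) by (meson order_trans)
  ultimately show ?case
    using pendant_extend[OF remove.prems(1) p] s(1) curve by blast
qed

definition flow_vector :: "('v \<times> 'v \<Rightarrow> real) \<Rightarrow> real ^ ('v \<times> 'v)" where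
  "flow_vector \<theta> = (\<chi> p.
     if p \<in> E then flow_ik Vm g b (fst p) (snd p) (\<theta> p)
     else if prod.swap p \<in> E then flow_ki Vm g b (snd p) (fst p) (\<theta> (prod.swap p)) else 0)"

lemma flow_region_eq: "flow_region E Vm g b \<theta>lo \<theta>hi = flow_vector ` Collect (admissible E)"
proof
  show "flow_vector ` Collect (admissible E) \<subseteq> flow_region E Vm g b \<theta>lo \<theta>hi"
    using edge_not_reversed
    by (force simp: flow_region_def flow_vector_def admissible_def dir_edges_def)
next
  show "flow_region E Vm g b \<theta>lo \<theta>hi \<subseteq> flow_vector ` Collect (admissible E)"
  proof
    fix f assume f: "f \<in> flow_region E Vm g b \<theta>lo \<theta>hi"
    have "\<exists>t. t \<in> {\<theta>lo e..\<theta>hi e} \<and> f $ e = flow_ik Vm g b (fst e) (snd e) t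
        \<and> f $ (snd e, fst e) = flow_ki Vm g b (fst e) (snd e) t" if "e \<in> E" for e
      using f that unfolding flow_region_def by (cases e) auto
    then obtain \<theta> where \<theta>: "\<And>e. e \<in> E \<Longrightarrow> \<theta> e \<in> {\<theta>lo e..\<theta>hi e}
        \<and> f $ e = flow_ik Vm g b (fst e) (snd e) (\<theta> e)
        \<and> f $ (snd e, fst e) = flow_ki Vm g b (fst e) (snd e) (\<theta> e)"
      by metis
    have "f = flow_vector \<theta>"
    proof (rule vec_eq_iff[THEN iffD2], intro allI)
      fix p :: "'v \<times> 'v"
      obtain i k where p: "p = (i, k)" by fastforce
      show "f $ p = flow_vector \<theta> $ p"
        using \<theta>[of "(i, k)"] \<theta>[of "(k, i)"] f edge_not_reversed[of i k]
        unfolding p flow_vector_def flow_region_def dir_edges_def by auto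
    qed
    moreover have "admissible E \<theta>" using \<theta> unfolding admissible_def by blast
    ultimately show "f \<in> flow_vector ` Collect (admissible E)" by blast
  qed
qed

lemma inj_map_flow_vector: "inj_map E (flow_vector \<theta>) $ w = injection E \<theta> w"
proof -
  define T where "T = {e \<in> E. fst e = w \<or> snd e = w}"
  have "inj_map E (flow_vector \<theta>) $ w = (\<Sum>k\<in>{k. (w, k) \<in> dir_edges E}. flow_vector \<theta> $ (w, k))"
    unfolding inj_map_def by simp
  also have "\<dots> = (\<Sum>e\<in>T. flow e w (\<theta> e))"
    using edge_not_reversed edge_not_loop
    by (intro sum.reindex_bij_witness[where i = "\<lambda>e. if fst e = w then snd e else fst e"
          and j = "\<lambda>k. if (w, k) \<in> E then (w, k) else (k, w)"])
       (force simp: T_def dir_edges_def flow_vector_def line_flow_def)+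
  also have "\<dots> = injection E \<theta> w"
    unfolding injection_def T_def by (rule sum.mono_neutral_left) (auto simp: line_flow_def)
  finally show ?thesis .
qed

lemma flow_vector_cong: "(\<And>e. e \<in> E \<Longrightarrow> \<theta> e = \<theta>' e) \<Longrightarrow> flow_vector \<theta> = flow_vector \<theta>'"
  unfolding flow_vector_def by (simp add: vec_eq_iff)

lemma inj_map_le_imp_eq:
  assumes "f \<in> flow_region E Vm g b \<theta>lo \<theta>hi" "f' \<in> flow_region E Vm g b \<theta>lo \<theta>hi"
    and "\<forall>i. inj_map E f' $ i \<le> inj_map E f $ i"
  shows "f' = f"
proof -
  obtain \<theta> \<theta>' where \<theta>: "admissible E \<theta>" "f = flow_vector \<theta>"
    and \<theta>': "admissible E \<theta>'" "f' = flow_vector \<theta>'"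
    using assms(1,2) unfolding flow_region_eq by blast
  have "\<forall>e\<in>E. \<theta>' e = \<theta> e"
    using assms(3) \<theta> \<theta>' by (intro injection_le_imp_eq) (simp_all add: inj_map_flow_vector)
  then show ?thesis
    using \<theta>(2) \<theta>'(2) flow_vector_cong by metis
qed

lemma inj_region_theta_le_imp_eq:
  assumes "x \<in> inj_region_theta E Vm g b \<theta>lo \<theta>hi" "y \<in> inj_region_theta E Vm g b \<theta>lo \<theta>hi"
    and "\<forall>i. y $ i \<le> x $ i"
  shows "y = x"
proof -
  obtain f f' where "f \<in> flow_region E Vm g b \<theta>lo \<theta>hi" "x = inj_map E f"
    "f' \<in> flow_region E Vm g b \<theta>lo \<theta>hi" "y = inj_map E f'"
    using assms(1,2) unfolding inj_region_theta_def by blast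
  then show ?thesis using inj_map_le_imp_eq assms(3) by blast
qed

lemma convex_hull_dominates:
  fixes Plo Phi :: "'v \<Rightarrow> real"
  defines "P \<equiv> inj_region_theta E Vm g b \<theta>lo \<theta>hi \<inter> inj_region_P Plo Phi"
  assumes "z \<in> convex hull P"
  shows "\<exists>w\<in>P. \<forall>i. w $ i \<le> z $ i"
proof -
  obtain S u where S: "finite S" "S \<subseteq> P" "\<forall>x\<in>S. 0 \<le> u x" "sum u S = 1"
    and z: "(\<Sum>y\<in>S. u y *\<^sub>R y) = z"
    using assms(2) unfolding convex_hull_explicit by blast
  have "\<exists>\<theta>. admissible E \<theta> \<and> y = inj_map E (flow_vector \<theta>)" if "y \<in> S" for y
    using S(2) that unfolding P_def inj_region_theta_def flow_region_eq by blast
  then obtain \<Theta> where \<Theta>: "\<And>y. y \<in> S \<Longrightarrow> admissible E (\<Theta> y) \<and> y = inj_map E (flow_vector (\<Theta> y))"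
    by metis
  have inj: "injection E (\<Theta> y) i = y $ i" if "y \<in> S" for y i
    using \<Theta>[OF that] by (metis inj_map_flow_vector)
  have z_nth: "z $ i = (\<Sum>y\<in>S. u y * injection E (\<Theta> y) i)" for i
    using z inj by (auto intro: sum.cong)
  have bounds: "\<forall>y\<in>S. Plo i \<le> y $ i \<and> y $ i \<le> Phi i" for i
    using S(2) unfolding P_def inj_region_P_def by blast
  obtain \<theta> where \<theta>: "admissible E \<theta>" "\<And>i. Plo i \<le> injection E \<theta> i \<and> injection E \<theta> i \<le> z $ i"
    using injection_between_convex_combination[OF subset_refl S(1,3,4), of \<Theta> Plo "\<lambda>i. z $ i"]
      \<Theta> bounds inj z_nth by auto
  define w where "w = inj_map E (flow_vector \<theta>)"
  have "w \<in> inj_region_theta E Vm g b \<theta>lo \<theta>hi"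
    using \<theta>(1) unfolding w_def inj_region_theta_def flow_region_eq by blast
  moreover have "z $ i \<le> Phi i" for i
    using convex_combination_in_interval[OF S(1,3,4), of "\<lambda>y. y $ i" "Plo i" "Phi i"] bounds z_nth inj
    by simp
  then have "Plo i \<le> w $ i \<and> w $ i \<le> Phi i" for i
    using \<theta>(2)[of i] unfolding w_def inj_map_flow_vector by (meson order_trans)
  then have "w \<in> inj_region_P Plo Phi"
    unfolding inj_region_P_def by blast
  moreover have "\<forall>i. w $ i \<le> z $ i"
    using \<theta>(2) unfolding w_def inj_map_flow_vector by blast
  ultimately show ?thesis unfolding P_def by blast
qed

end

section \<open>Pareto optimality\<close>

lemma pareto_eq_self:
  assumes "\<And>x y. x \<in> S \<Longrightarrow> y \<in> S \<Longrightarrow> (\<forall>i. y $ i \<le> x $ i) \<Longrightarrow> y = x"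
  shows "pareto S = S"
  using assms unfolding pareto_def by (fastforce simp: less_le)

lemma pareto_eq_if_dominated:
  assumes "S \<subseteq> T" and dominated: "\<And>z. z \<in> T \<Longrightarrow> \<exists>w\<in>S. \<forall>i. w $ i \<le> z $ i"
  shows "pareto T = pareto S"
proof
  show "pareto T \<subseteq> pareto S"
  proof
    fix z assume z: "z \<in> pareto T"
    then obtain w where w: "w \<in> S" "\<forall>i. w $ i \<le> z $ i"
      using dominated unfolding pareto_def by blast
    then have "w = z"
      using z \<open>S \<subseteq> T\<close> unfolding pareto_def by (auto simp: vec_eq_iff less_le)
    then show "z \<in> pareto S"
      using z w(1) \<open>S \<subseteq> T\<close> unfolding pareto_def by blast
  qed
  show "pareto S \<subseteq> pareto T"
  proof
    fix x assume x: "x \<in> pareto S"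
    have "\<not> (\<exists>z\<in>T. (\<forall>i. z $ i \<le> x $ i) \<and> (\<exists>i. z $ i < x $ i))"
    proof
      assume "\<exists>z\<in>T. (\<forall>i. z $ i \<le> x $ i) \<and> (\<exists>i. z $ i < x $ i)"
      then obtain z i where z: "z \<in> T" "\<forall>i. z $ i \<le> x $ i" "z $ i < x $ i" by blast
      then obtain w where w: "w \<in> S" "\<forall>i. w $ i \<le> z $ i" using dominated by blast
      then have "\<forall>k. w $ k \<le> x $ k" "w $ i < x $ i"
        using z(2,3) by (auto intro: order_trans le_less_trans)
      then show False
        using x w(1) unfolding pareto_def by blast
    qed
    then show "x \<in> pareto T"
      using x \<open>S \<subseteq> T\<close> unfolding pareto_def by blast
  qed
qed

theorem theorem1:
  fixes E :: "('v::finite \<times> 'v) set"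
    and Vm :: "'v \<Rightarrow> real"
    and g b \<theta>lo \<theta>hi :: "'v \<times> 'v \<Rightarrow> real"
    and Plo Phi :: "'v \<Rightarrow> real"
  assumes tree: "tree_network E"
    and Vpos: "\<forall>i. Vm i > 0"
    and gb_nonneg: "\<forall>e\<in>E. g e \<ge> 0 \<and> b e \<ge> 0"
    and y_nonzero: "\<forall>e\<in>E. g e \<noteq> 0 \<or> b e \<noteq> 0"
    and lo_range: "\<forall>e\<in>E. - pi \<le> \<theta>lo e \<and> \<theta>lo e \<le> 0"
    and hi_range: "\<forall>e\<in>E. 0 \<le> \<theta>hi e \<and> \<theta>hi e \<le> pi"
    and nonempty: "inj_region_theta E Vm g b \<theta>lo \<theta>hi \<inter> inj_region_P Plo Phi \<noteq> {}"
    and angle_cond: "\<forall>e\<in>E. - atan_ratio (b e) (g e) < \<theta>lo e \<and> \<theta>lo e \<le> \<theta>hi e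
                          \<and> \<theta>hi e < atan_ratio (b e) (g e)"
  shows "(\<forall>p \<in> inj_region_theta E Vm g b \<theta>lo \<theta>hi \<inter> inj_region_P Plo Phi.
            \<exists>!f. f \<in> flow_region E Vm g b \<theta>lo \<theta>hi \<and> inj_map E f = p)
       \<and> inj_region_theta E Vm g b \<theta>lo \<theta>hi \<inter> inj_region_P Plo Phi
           = pareto (inj_region_theta E Vm g b \<theta>lo \<theta>hi \<inter> inj_region_P Plo Phi)
       \<and> pareto (inj_region_theta E Vm g b \<theta>lo \<theta>hi \<inter> inj_region_P Plo Phi)
           = pareto (convex hull (inj_region_theta E Vm g b \<theta>lo \<theta>hi \<inter> inj_region_P Plo Phi))"
proof -
  interpret power_tree E Vm g b \<theta>lo \<theta>hi
    using tree Vpos gb_nonneg y_nonzero angle_cond by unfold_locales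
  let ?F = "flow_region E Vm g b \<theta>lo \<theta>hi"
  let ?P = "inj_region_theta E Vm g b \<theta>lo \<theta>hi \<inter> inj_region_P Plo Phi"
  have unique: "\<exists>!f. f \<in> ?F \<and> inj_map E f = p" if p: "p \<in> ?P" for p
  proof -
    obtain f where f: "f \<in> ?F" "inj_map E f = p"
      using p unfolding inj_region_theta_def by blast
    show ?thesis
    proof (rule ex1I)
      show "f \<in> ?F \<and> inj_map E f = p" using f by simp
      show "f' = f" if "f' \<in> ?F \<and> inj_map E f' = p" for f'
        using that f by (intro inj_map_le_imp_eq) simp_all
    qed
  qed
  have pareto_P: "pareto ?P = ?P"
  proof (rule pareto_eq_self)
    show "y = x" if "x \<in> ?P" "y \<in> ?P" "\<forall>i. y $ i \<le> x $ i" for x y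
      using that by (intro inj_region_theta_le_imp_eq) simp_all
  qed
  have pareto_hull: "pareto (convex hull ?P) = pareto ?P"
    by (rule pareto_eq_if_dominated[OF hull_subset convex_hull_dominates])
  show ?thesis
    using unique pareto_P pareto_hull by (intro conjI ballI) simp_all
qed

end
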